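(* If $G$ is a connected bipartite graph of order $n$ with minimum degree $1$, then ${\rm I}_e(G)\le n-1$.
   Context: All graphs are finite and simple. A graph is locally irregular if no two adjacent vertices have the same degree. An edge-irregulator of a graph $G$ is a set $S\subseteq E(G)$ such that $G-S$ is locally irregular; ${\rm I}_e(G)$ is the minimum cardinality of an edge-irregulator of $G$. *)

theory Defs
  imports Main
begin

definition graph :: "'a set \<Rightarrow> 'a set set \<Rightarrow> bool" where
  "graph V E \<longleftrightarrow> finite V \<and> (\<forall>e\<in>E. e \<subseteq> V \<and> card e = 2)"

definition degree :: "'a set set \<Rightarrow> 'a \<Rightarrow> nat" where
  "degree E v = card {e \<in> E. v \<in> e}"

definition adj :: "'a set set \<Rightarrow> 'a \<Rightarrow> 'a \<Rightarrow> bool" where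
  "adj E u v \<longleftrightarrow> {u, v} \<in> E"

fun walk :: "'a set set \<Rightarrow> 'a list \<Rightarrow> bool" where
  "walk E [] = False"
| "walk E [v] = True"
| "walk E (u # v # vs) = (adj E u v \<and> walk E (v # vs))"

definition connected :: "'a set \<Rightarrow> 'a set set \<Rightarrow> bool" where
  "connected V E \<longleftrightarrow> V \<noteq> {} \<and>
     (\<forall>u\<in>V. \<forall>v\<in>V. \<exists>p. walk E p \<and> hd p = u \<and> last p = v)"

definition bipartite :: "'a set \<Rightarrow> 'a set set \<Rightarrow> bool" where
  "bipartite V E \<longleftrightarrow> (\<exists>A B. A \<union> B = V \<and> A \<inter> B = {} \<and>
      (\<forall>e\<in>E. \<exists>a\<in>A. \<exists>b\<in>B. e = {a, b}))"

definition min_degree :: "'a set \<Rightarrow> 'a set set \<Rightarrow> nat" where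
  "min_degree V E = Min (degree E ` V)"

definition locally_irregular :: "'a set set \<Rightarrow> bool" where
  "locally_irregular E \<longleftrightarrow> (\<forall>u v. adj E u v \<longrightarrow> degree E u \<noteq> degree E v)"

definition edge_irregulator :: "'a set set \<Rightarrow> 'a set set \<Rightarrow> bool" where
  "edge_irregulator E S \<longleftrightarrow> S \<subseteq> E \<and> locally_irregular (E - S)"

text \<open>Minimum cardinality of an edge-irregulator (E itself always is one).\<close>
definition Ie :: "'a set set \<Rightarrow> nat" where
  "Ie E = (LEAST k. \<exists>S. edge_irregulator E S \<and> card S = k)"

end

theory Submission
  imports Defs
begin

text \<open>In a connected graph on \<open>n\<close> vertices every vertex set \<open>T\<close> of even size is the set of
odd-degree vertices of some at most \<open>n - 1\<close> edges (a \<open>T\<close>-join inside a spanning tree, built by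
adding the vertices one at a time). Let \<open>v\<close> be a leaf lying in the side \<open>A\<close> of the bipartition.
Removing a \<open>T\<close>-join, where \<open>T\<close> consists of the vertices other than \<open>v\<close> whose degree parity is
wrong (plus \<open>v\<close> if needed to make \<open>|T|\<close> even), makes every vertex of \<open>A - {v}\<close> odd and every
vertex of \<open>B\<close> even. Afterwards \<open>v\<close> has degree \<open>0\<close> or \<open>1\<close>, so every remaining edge joins a
vertex of odd degree to one of even degree.\<close>

lemma finite_edges: "graph V E \<Longrightarrow> finite E"
  unfolding graph_def by (meson PowI finite_Pow_iff finite_subset subsetI)

lemma degree_insert:
  assumes "finite S" "e \<notin> S"
  shows "degree (insert e S) w = degree S w + (if w \<in> e then 1 else 0)"
proof -
  have "{e' \<in> insert e S. w \<in> e'} = (if w \<in> e then insert e {e' \<in> S. w \<in> e'} else {e' \<in> S. w \<in> e'})"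
    by auto
  then show ?thesis using assms by (simp add: degree_def)
qed

lemma degree_Diff_add:
  assumes "finite E" "S \<subseteq> E"
  shows "degree (E - S) w + degree S w = degree E w"
proof -
  have "{e \<in> E. w \<in> e} = {e \<in> E - S. w \<in> e} \<union> {e \<in> S. w \<in> e}" using assms by auto
  moreover have "card ({e \<in> E - S. w \<in> e} \<union> {e \<in> S. w \<in> e}) =
      card {e \<in> E - S. w \<in> e} + card {e \<in> S. w \<in> e}"
    using assms by (intro card_Un_disjoint) (auto intro: rev_finite_subset)
  ultimately show ?thesis by (simp add: degree_def)
qed

lemma walk_crosses_boundary:
  "walk E p \<Longrightarrow> hd p \<in> X \<Longrightarrow> last p \<notin> X \<Longrightarrow>
    \<exists>x y. {x, y} \<in> E \<and> x \<in> X \<and> y \<notin> X"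
  by (induction E p rule: walk.induct) (auto simp: adj_def)

lemma connected_crossing_edge:
  assumes "connected V E" "X \<subseteq> V" "X \<noteq> {}" "X \<noteq> V"
  obtains x y where "{x, y} \<in> E" "x \<in> X" "y \<notin> X"
proof -
  obtain x0 y0 where "x0 \<in> X" "y0 \<in> V - X" using assms(2-4) by blast
  with assms(1,2) obtain p where "walk E p" "hd p = x0" "last p = y0"
    unfolding connected_def by blast
  then show ?thesis using walk_crosses_boundary that \<open>x0 \<in> X\<close> \<open>y0 \<in> V - X\<close> by blast
qed

lemma min_degree_attained:
  assumes "finite V" "V \<noteq> {}"
  obtains v where "v \<in> V" "degree E v = min_degree V E"
proof -
  have "min_degree V E \<in> degree E ` V"
    unfolding min_degree_def using assms by (intro Min_in) auto
  then show ?thesis using that by (metis imageE)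
qed

lemma bipartition_containing:
  assumes "bipartite V E" "v \<in> V"
  obtains A B
  where "A \<union> B = V" "A \<inter> B = {}" "\<forall>e\<in>E. \<exists>a\<in>A. \<exists>b\<in>B. e = {a, b}" "v \<in> A"
proof -
  obtain A B where AB: "A \<union> B = V" "A \<inter> B = {}" "\<forall>e\<in>E. \<exists>a\<in>A. \<exists>b\<in>B. e = {a, b}"
    using assms(1) unfolding bipartite_def by blast
  moreover have "\<forall>e\<in>E. \<exists>b\<in>B. \<exists>a\<in>A. e = {b, a}"
    using AB(3) by (metis insert_commute)
  ultimately show ?thesis using that[of A B] that[of B A] assms(2) by blast
qed

lemma Ie_le_card: "edge_irregulator E S \<Longrightarrow> Ie E \<le> card S"
  unfolding Ie_def by (rule Least_le) blast

definition odd_vertices :: "'a set set \<Rightarrow> 'a set" where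
  "odd_vertices S = {w. odd (degree S w)}"

lemma odd_vertices_insert:
  assumes "finite S" "e \<notin> S"
  shows "odd_vertices (insert e S) = sym_diff (odd_vertices S) e"
proof -
  have "w \<in> odd_vertices (insert e S) \<longleftrightarrow> w \<in> sym_diff (odd_vertices S) e" for w
    using degree_insert[OF assms, of w] unfolding odd_vertices_def by simp
  then show ?thesis by blast
qed

lemma even_card_sym_diff:
  assumes "finite A" "finite B"
  shows "even (card (sym_diff A B)) \<longleftrightarrow> even (card A + card B)"
proof -
  have "card (sym_diff A B) = card (A - B) + card (B - A)"
    using assms by (intro card_Un_disjoint) auto
  moreover have "card A = card (A \<inter> B) + card (A - B)" "card B = card (B \<inter> A) + card (B - A)"
    using assms by (simp_all only: card_Int_Diff)
  moreover have "B \<inter> A = A \<inter> B" by blast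
  ultimately have "card A + card B = card (sym_diff A B) + 2 * card (A \<inter> B)" by simp
  then show ?thesis by simp
qed

definition small_joins :: "'a set set \<Rightarrow> 'a set \<Rightarrow> bool" where
  "small_joins E X \<longleftrightarrow> (\<forall>T \<subseteq> X. even (card T) \<longrightarrow>
     (\<exists>S \<subseteq> E. (\<forall>e\<in>S. e \<subseteq> X) \<and> card S \<le> card X - 1 \<and> odd_vertices S = T))"

lemma small_joinsE:
  assumes "small_joins E X" "T \<subseteq> X" "even (card T)"
  obtains S where "S \<subseteq> E" "\<forall>e\<in>S. e \<subseteq> X" "card S \<le> card X - 1" "odd_vertices S = T"
  using assms(1)[unfolded small_joins_def, rule_format, OF assms(2,3)] that by blast

lemma small_joins_singleton: "small_joins E {x}"
  unfolding small_joins_def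
proof (intro allI impI)
  fix T assume "T \<subseteq> {x}" "even (card T)"
  then have "T = {}" by (auto simp: subset_singleton_iff)
  then show "\<exists>S \<subseteq> E. (\<forall>e\<in>S. e \<subseteq> {x}) \<and> card S \<le> card {x} - 1 \<and> odd_vertices S = T"
    by (intro exI[of _ "{}"]) (simp add: odd_vertices_def degree_def)
qed

lemma small_joins_insert:
  assumes joins: "small_joins E X" and "finite X" "finite E"
    and xy: "{x, y} \<in> E" "x \<in> X" "y \<notin> X"
  shows "small_joins E (insert y X)"
  unfolding small_joins_def
proof (intro allI impI)
  fix T assume T: "T \<subseteq> insert y X" "even (card T)"
  have card_X: "card (insert y X) - 1 = card X" "card X \<ge> 1"
    using assms by (auto simp: Suc_le_eq card_gt_0_iff)
  show "\<exists>S \<subseteq> E. (\<forall>e\<in>S. e \<subseteq> insert y X) \<and> card S \<le> card (insert y X) - 1 \<and>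
      odd_vertices S = T"
  proof (cases "y \<in> T")
    case False
    then have "T \<subseteq> X" using T(1) by blast
    from joins this T(2)
    obtain S where "S \<subseteq> E" "\<forall>e\<in>S. e \<subseteq> X" "card S \<le> card X - 1" "odd_vertices S = T"
      by (rule small_joinsE)
    then show ?thesis using card_X by (intro exI[of _ S]) auto
  next
    case True
    define T' where "T' = sym_diff T {x, y}"
    have T'_sub: "T' \<subseteq> X" using T(1) True xy(2) unfolding T'_def by blast
    have T'_even: "even (card T')"
    proof -
      have "finite T" using T(1) \<open>finite X\<close> finite_subset by blast
      moreover have "card {x, y} = 2" using xy(2,3) by (metis card_2_iff)
      ultimately show ?thesis
        using even_card_sym_diff[of T "{x, y}"] T(2) unfolding T'_def by simp
    qed
    from joins T'_sub T'_even
    obtain S' where S': "S' \<subseteq> E" "\<forall>e\<in>S'. e \<subseteq> X" "card S' \<le> card X - 1"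
        "odd_vertices S' = T'"
      by (rule small_joinsE)
    have "finite S'" using S'(1) \<open>finite E\<close> by (auto intro: rev_finite_subset)
    have "{x, y} \<notin> S'" using S'(2) xy(3) by auto
    have "odd_vertices (insert {x, y} S') = T"
      using odd_vertices_insert[OF \<open>finite S'\<close> \<open>{x, y} \<notin> S'\<close>] S'(4) True
      unfolding T'_def by auto
    moreover have "card (insert {x, y} S') \<le> card (insert y X) - 1"
      using S'(3) \<open>finite S'\<close> \<open>{x, y} \<notin> S'\<close> card_X by simp
    moreover have "insert {x, y} S' \<subseteq> E" "\<forall>e\<in>insert {x, y} S'. e \<subseteq> insert y X"
      using S'(1,2) xy by auto
    ultimately show ?thesis by (intro exI[of _ "insert {x, y} S'"]) simp
  qed
qed

lemma connected_small_joins: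
  assumes G: "graph V E" and C: "connected V E"
  shows "small_joins E V"
proof -
  have "finite V" "finite E" using G finite_edges unfolding graph_def by auto
  have "\<exists>X \<subseteq> V. card X = n \<and> small_joins E X" if "1 \<le> n" "n \<le> card V" for n
    using that
  proof (induction n rule: nat_induct_at_least)
    case base
    obtain x where "x \<in> V" using C unfolding connected_def by blast
    then show ?case using small_joins_singleton by (intro exI[of _ "{x}"]) auto
  next
    case (Suc n)
    then obtain X where X: "X \<subseteq> V" "card X = n" "small_joins E X" by auto
    have "finite X" using X(1) \<open>finite V\<close> by (rule finite_subset)
    have "X \<noteq> {}" "X \<noteq> V" using X(2) Suc(1,3) by auto
    then obtain x y where xy: "{x, y} \<in> E" "x \<in> X" "y \<notin> X"
      using connected_crossing_edge[OF C X(1)] by blast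
    have "y \<in> V" using xy(1) G unfolding graph_def by blast
    then show ?case
      using small_joins_insert[OF X(3) \<open>finite X\<close> \<open>finite E\<close> xy] X \<open>finite X\<close> xy(3)
      by (intro exI[of _ "insert y X"]) auto
  qed
  moreover have "1 \<le> card V" using C \<open>finite V\<close> unfolding connected_def
    by (simp add: Suc_le_eq card_gt_0_iff)
  ultimately show ?thesis using card_subset_eq[OF \<open>finite V\<close>] by blast
qed

lemma locally_irregular_if_parities_alternate:
  assumes "\<forall>e\<in>F. \<exists>a b. e = {a, b} \<and> odd (degree F a) \<and> even (degree F b)"
  shows "locally_irregular F"
  unfolding locally_irregular_def adj_def
proof (intro allI impI)
  fix u w assume "{u, w} \<in> F"
  with assms have "\<exists>a b. {u, w} = {a, b} \<and> odd (degree F a) \<and> even (degree F b)"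
    by (rule bspec)
  then obtain a b where "{u, w} = {a, b}" "odd (degree F a)" "even (degree F b)"
    by blast
  then show "degree F u \<noteq> degree F w" by (auto simp: doubleton_eq_iff)
qed

lemma bipartite_leaf_irregulator:
  assumes G: "graph V E" and C: "connected V E"
    and AB: "A \<union> B = V" "A \<inter> B = {}" "\<forall>e\<in>E. \<exists>a\<in>A. \<exists>b\<in>B. e = {a, b}"
    and v: "v \<in> A" "degree E v = 1"
  obtains S where "edge_irregulator E S" "card S \<le> card V - 1"
proof -
  have "finite V" "finite E" using G finite_edges unfolding graph_def by auto
  define M where "M = {w \<in> V - {v}. odd (degree E w) \<noteq> (w \<in> A)}"
  define T where "T = (if even (card M) then M else insert v M)"
  have "T \<subseteq> V" "even (card T)"
    using v(1) AB(1) \<open>finite V\<close> unfolding T_def M_def by auto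
  with connected_small_joins[OF G C]
  obtain S where S: "S \<subseteq> E" "card S \<le> card V - 1" "odd_vertices S = T"
    by (rule small_joinsE)
  let ?F = "E - S"
  have parity: "odd (degree ?F w) \<longleftrightarrow> w \<in> A" if "w \<in> V" "w \<noteq> v" for w
  proof -
    have "w \<in> T \<longleftrightarrow> odd (degree E w) \<noteq> (w \<in> A)" using that unfolding T_def M_def by auto
    moreover have "odd (degree S w) \<longleftrightarrow> w \<in> T" using S(3) unfolding odd_vertices_def by blast
    ultimately show ?thesis using degree_Diff_add[OF \<open>finite E\<close> S(1), of w] by (metis even_add)
  qed
  have alternating: "odd (degree ?F a) \<and> even (degree ?F b)"
    if "{a, b} \<in> ?F" "a \<in> A" "b \<in> B" for a b
  proof -
    have "even (degree ?F b)" using parity[of b] that(3) AB(1,2) v(1) by auto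
    moreover have "odd (degree ?F a)"
    proof (cases "a = v")
      case True
      have "degree ?F v \<noteq> 0"
        using that(1) True \<open>finite E\<close> unfolding degree_def by (auto simp: card_eq_0_iff)
      moreover have "degree ?F v \<le> 1" using degree_Diff_add[OF \<open>finite E\<close> S(1), of v] v(2) by simp
      ultimately have "degree ?F v = 1" by linarith
      then show ?thesis using True by simp
    qed (use parity[of a] that(2) AB(1) in auto)
    ultimately show ?thesis by blast
  qed
  have "\<forall>e\<in>?F. \<exists>a b. e = {a, b} \<and> odd (degree ?F a) \<and> even (degree ?F b)"
  proof
    fix e assume "e \<in> ?F"
    moreover obtain a b where "a \<in> A" "b \<in> B" "e = {a, b}"
      using AB(3) \<open>e \<in> ?F\<close> by blast
    ultimately show "\<exists>a b. e = {a, b} \<and> odd (degree ?F a) \<and> even (degree ?F b)"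
      using alternating by blast
  qed
  then have "locally_irregular ?F" by (rule locally_irregular_if_parities_alternate)
  then show ?thesis using that S(1,2) unfolding edge_irregulator_def by blast
qed

theorem theorem6:
  fixes V :: "'a set" and E :: "'a set set"
  assumes "graph V E"
    and "connected V E"
    and "bipartite V E"
    and "min_degree V E = 1"
  shows "Ie E \<le> card V - 1"
proof -
  have "finite V" "V \<noteq> {}" using assms(1,2) unfolding graph_def connected_def by auto
  then obtain v where v: "v \<in> V" "degree E v = 1"
    using assms(4) by (metis min_degree_attained)
  obtain A B where AB: "A \<union> B = V" "A \<inter> B = {}" "\<forall>e\<in>E. \<exists>a\<in>A. \<exists>b\<in>B. e = {a, b}" "v \<in> A"
    using assms(3) v(1) by (rule bipartition_containing)
  obtain S where "edge_irregulator E S" "card S \<le> card V - 1"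
    using assms(1,2) AB v(2) by (rule bipartite_leaf_irregulator)
  then show ?thesis using Ie_le_card le_trans by blast
qed

end
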